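(* Let $p$ be a prime with $p\equiv1\pmod 4$. For every $0<\varepsilon<\frac34$ there is an integer $q_\varepsilon$ such that for every prime $q\ge q_\varepsilon$ with $q\equiv1\pmod4$ and $q\ne p$, either the spectrum of the Cayley graph $C(G_q,S^{p,q})$ contains a sub-multiset of size at least $(\frac34-\varepsilon)|G_q|$ which is symmetric about the origin, or there exist $\tilde\sigma_q\in\left\{\begin{pmatrix}0&1\\1&0\end{pmatrix},\begin{pmatrix}0&1\\-1&0\end{pmatrix},\begin{pmatrix}-1&0\\0&1\end{pmatrix}\right\}$ and $\tilde\tau_q\in\left\{\begin{pmatrix}0&1\\i&0\end{pmatrix},\begin{pmatrix}0&-1\\i&0\end{pmatrix},\begin{pmatrix}-1&0\\0&1\end{pmatrix}\right\}$ such that $C(G_q,S^{p,q})$ is non-isomorphic to each of the twisted Cayley graphs $C(G_q,S^{p,q})^{\sigma_q}$ and $C(G_q,S^{p,q})^{\tau_q}$, where $\sigma_q$ (resp. $\tau_q$) is the automorphism of $G_q$ given by conjugation by $\tilde\sigma_q$ (resp. $\tilde\tau_q$).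
   Context: For a prime $q\equiv1\pmod4$, $i$ denotes an integer with $i^2\equiv-1\pmod q$. $G_q$ is $\mathrm{PSL}_2(\mathbb F_q)$ if $p$ is a square modulo $q$ and $\mathrm{PGL}_2(\mathbb F_q)$ otherwise. $S^{p,q}$ is the set of elements of $\mathrm{PGL}_2(\mathbb F_q)$ represented by $\begin{pmatrix}a_0+ia_1&a_2+ia_3\\-a_2+ia_3&a_0-ia_1\end{pmatrix}$ (entries mod $q$) with $a_0,a_1,a_2,a_3$ integers, $a_0^2+a_1^2+a_2^2+a_3^2=p$, and $a_0-1,a_1,a_2,a_3$ even. The matrices listed are in $\mathrm{GL}_2(\mathbb F_q)$ and act on $G_q$ by conjugation. For a group $G$, subset $S$ and automorphism $\tau$, $C(G,S)$ has an edge from $x$ to $xs$ and $C(G,S)^\tau$ an edge from $x$ to $\tau(xs)$ for each $s\in S$. The spectrum is the multiset of eigenvalues of the adjacency matrix; a multiset $M$ is symmetric about the origin if $M=-M$. *)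

theory Defs
  imports "HOL-Number_Theory.Number_Theory" "HOL-Combinatorics.Combinatorics"
    "HOL-Computational_Algebra.Polynomial" "HOL-Library.Multiset"
begin

text \<open>A 2x2 integer matrix (a,b,c,d) stands for [[a,b],[c,d]]; entries are read modulo q.\<close>
type_synonym mat2 = "int \<times> int \<times> int \<times> int"

fun mat2_mult :: "mat2 \<Rightarrow> mat2 \<Rightarrow> mat2" where
  "mat2_mult (a,b,c,d) (e,f,g,h) = (a*e + b*g, a*f + b*h, c*e + d*g, c*f + d*h)"

fun mat2_det :: "mat2 \<Rightarrow> int" where
  "mat2_det (a,b,c,d) = a*d - b*c"

text \<open>adjugate: M * adj M = det M * I, so adj M represents M^-1 in PGL_2.\<close>
fun mat2_adj :: "mat2 \<Rightarrow> mat2" where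
  "mat2_adj (a,b,c,d) = (d, -b, -c, a)"

fun mat2_red :: "int \<Rightarrow> mat2 \<Rightarrow> mat2" where
  "mat2_red q (a,b,c,d) = (a mod q, b mod q, c mod q, d mod q)"

fun mat2_smult :: "int \<Rightarrow> mat2 \<Rightarrow> mat2" where
  "mat2_smult k (a,b,c,d) = (k*a, k*b, k*c, k*d)"

text \<open>The element of PGL_2(F_q) represented by M: the set of all reduced nonzero scalar multiples.\<close>
definition pgl_class :: "int \<Rightarrow> mat2 \<Rightarrow> mat2 set" where
  "pgl_class q M = {mat2_red q (mat2_smult k M) | k. \<not> q dvd k}"

definition PGL2 :: "int \<Rightarrow> mat2 set set" where
  "PGL2 q = {pgl_class q M | M. \<not> q dvd mat2_det M}"

text \<open>Image of SL_2(F_q) in PGL_2(F_q) = PSL_2(F_q): classes of matrices with square determinant.\<close>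
definition PSL2 :: "int \<Rightarrow> mat2 set set" where
  "PSL2 q = {pgl_class q M | M. \<not> q dvd mat2_det M \<and> QuadRes q (mat2_det M)}"

definition Gq :: "int \<Rightarrow> int \<Rightarrow> mat2 set set" where
  "Gq p q = (if QuadRes q p then PSL2 q else PGL2 q)"

definition pgl_mult :: "int \<Rightarrow> mat2 set \<Rightarrow> mat2 set \<Rightarrow> mat2 set" where
  "pgl_mult q X Y = pgl_class q (mat2_mult (SOME M. M \<in> X) (SOME N. N \<in> Y))"

definition pgl_conj :: "int \<Rightarrow> mat2 \<Rightarrow> mat2 set \<Rightarrow> mat2 set" where
  "pgl_conj q T X = pgl_class q (mat2_mult (mat2_mult T (SOME M. M \<in> X)) (mat2_adj T))"

definition Spq :: "int \<Rightarrow> int \<Rightarrow> int \<Rightarrow> mat2 set set" where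
  "Spq p q i = {pgl_class q (a0 + i*a1, a2 + i*a3, -a2 + i*a3, a0 - i*a1) | a0 a1 a2 a3.
      a0^2 + a1^2 + a2^2 + a3^2 = p \<and> even (a0 - 1) \<and> even a1 \<and> even a2 \<and> even a3}"

definition cayley_adj :: "int \<Rightarrow> mat2 set set \<Rightarrow> mat2 set \<Rightarrow> mat2 set \<Rightarrow> nat" where
  "cayley_adj q S x y = card {s \<in> S. pgl_mult q x s = y}"

text \<open>Twisted Cayley graph C(G,S)^tau, tau = conjugation by T: edge x \<rightarrow> tau(x s).\<close>
definition twisted_adj :: "int \<Rightarrow> mat2 \<Rightarrow> mat2 set set \<Rightarrow> mat2 set \<Rightarrow> mat2 set \<Rightarrow> nat" where
  "twisted_adj q T S x y = card {s \<in> S. pgl_conj q T (pgl_mult q x s) = y}"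

definition graph_iso :: "'v set \<Rightarrow> ('v \<Rightarrow> 'v \<Rightarrow> nat) \<Rightarrow> ('v \<Rightarrow> 'v \<Rightarrow> nat) \<Rightarrow> bool" where
  "graph_iso V A B = (\<exists>f. bij_betw f V V \<and> (\<forall>x\<in>V. \<forall>y\<in>V. B (f x) (f y) = A x y))"

text \<open>Characteristic polynomial det(X I - A) of the adjacency matrix indexed by V (Leibniz formula).\<close>
definition char_poly_adj :: "'v set \<Rightarrow> ('v \<Rightarrow> 'v \<Rightarrow> nat) \<Rightarrow> complex poly" where
  "char_poly_adj V A = (\<Sum>\<pi> \<in> {\<pi>. \<pi> permutes V}. of_int (sign \<pi>) *
      (\<Prod>x\<in>V. (if \<pi> x = x then [:0, 1:] else 0) - [:of_nat (A x (\<pi> x)):]))"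

definition spectrum_adj :: "'v set \<Rightarrow> ('v \<Rightarrow> 'v \<Rightarrow> nat) \<Rightarrow> complex multiset" where
  "spectrum_adj V A = proots (char_poly_adj V A)"

definition symmetric_mset :: "complex multiset \<Rightarrow> bool" where
  "symmetric_mset M = (image_mset uminus M = M)"

end

theory Submission
  imports Defs "HOL-Computational_Algebra.Fundamental_Theorem_Algebra" "HOL-Library.Discrete_Functions"
begin

(* For q > p the statement already holds in a strong form, according to whether p is a square
   modulo q.

   If it is not, G_q = PGL_2(F_q), and every generator in S^{p,q} has determinant congruent to p,
   so right multiplication by a generator flips the Legendre symbol of the determinant.  Hence
   C(G_q, S^{p,q}) is bipartite and its whole spectrum, of size |G_q|, is symmetric about 0.

   If it is, G_q = PSL_2(F_q) and we take sigma = tau = conjugation by diag(-1, 1).  The Cayley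
   graph has no loops: a generator fixing a vertex is scalar modulo q, which for q > p forces
   p = a_0^2.  The twisted graph does have a loop, built from a representation p = a^2 + b^2.
   Since an isomorphism maps loops to loops, the two graphs are not isomorphic. *)

lemma mat2_red_mult: "mat2_red q (mat2_mult (mat2_red q M) (mat2_red q N)) = mat2_red q (mat2_mult M N)"
  by (cases M rule: prod_cases4; cases N rule: prod_cases4) (auto intro!: mod_add_cong simp: mod_mult_eq)

lemma mat2_red_smult: "mat2_red q (mat2_smult k (mat2_red q M)) = mat2_red q (mat2_smult k M)"
  by (cases M rule: prod_cases4) (simp add: mod_mult_right_eq)

lemma mat2_red_red [simp]: "mat2_red q (mat2_red q M) = mat2_red q M"
  by (cases M rule: prod_cases4) simp

lemma mat2_red_smult_cong: "[j = k] (mod q) \<Longrightarrow> mat2_red q (mat2_smult j M) = mat2_red q (mat2_smult k M)"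
  by (cases M rule: prod_cases4) (auto simp: cong_def intro: mod_mult_cong)

lemma mat2_red_cong:
  "[a = a'] (mod q) \<Longrightarrow> [b = b'] (mod q) \<Longrightarrow> [c = c'] (mod q) \<Longrightarrow> [d = d'] (mod q) \<Longrightarrow>
    mat2_red q (a, b, c, d) = mat2_red q (a', b', c', d')"
  by (simp add: cong_def)

lemma mat2_smult_smult [simp]: "mat2_smult j (mat2_smult k M) = mat2_smult (j * k) M"
  by (cases M rule: prod_cases4) (simp add: algebra_simps)

lemma mat2_smult_1 [simp]: "mat2_smult 1 M = M"
  by (cases M rule: prod_cases4) simp

lemma mat2_mult_smult_left [simp]: "mat2_mult (mat2_smult k M) N = mat2_smult k (mat2_mult M N)"
  by (cases M rule: prod_cases4; cases N rule: prod_cases4) (simp add: algebra_simps)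

lemma mat2_mult_smult_right [simp]: "mat2_mult M (mat2_smult k N) = mat2_smult k (mat2_mult M N)"
  by (cases M rule: prod_cases4; cases N rule: prod_cases4) (simp add: algebra_simps)

lemma mat2_mult_adj_left: "mat2_mult (mat2_adj M) M = (mat2_det M, 0, 0, mat2_det M)"
  by (cases M rule: prod_cases4) (simp add: algebra_simps)

lemma mat2_mult_assoc: "mat2_mult (mat2_mult L M) N = mat2_mult L (mat2_mult M N)"
  by (cases L rule: prod_cases4; cases M rule: prod_cases4; cases N rule: prod_cases4) (simp add: algebra_simps)

lemma mat2_det_mult: "mat2_det (mat2_mult M N) = mat2_det M * mat2_det N"
  by (cases M rule: prod_cases4; cases N rule: prod_cases4) (simp add: algebra_simps)

lemma mat2_det_smult: "mat2_det (mat2_smult k M) = k^2 * mat2_det M"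
  by (cases M rule: prod_cases4) (simp add: power2_eq_square algebra_simps)

lemma mat2_det_red: "[mat2_det (mat2_red q M) = mat2_det M] (mod q)"
  by (cases M rule: prod_cases4) (auto simp: cong_def mod_mult_eq intro!: mod_diff_cong)

section \<open>Projective classes\<close>

lemma pgl_class_red [simp]: "pgl_class q (mat2_red q M) = pgl_class q M"
  unfolding pgl_class_def by (simp add: mat2_red_smult)

lemma pgl_classE:
  assumes "Y \<in> pgl_class q M"
  obtains k where "\<not> q dvd k" "Y = mat2_red q (mat2_smult k M)"
  using assms unfolding pgl_class_def by auto

lemma mat2_red_in_pgl_class: "prime q \<Longrightarrow> mat2_red q M \<in> pgl_class q M"
  unfolding pgl_class_def by (rule CollectI, rule exI[of _ 1]) (auto simp: not_prime_unit)

lemma some_in_pgl_class: "prime q \<Longrightarrow> (SOME Y. Y \<in> pgl_class q M) \<in> pgl_class q M"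
  using mat2_red_in_pgl_class by (rule someI)

lemma pgl_class_smult:
  assumes q: "prime q" and k: "\<not> q dvd k"
  shows "pgl_class q (mat2_smult k M) = pgl_class q M"
proof -
  have sub: "pgl_class q (mat2_smult j N) \<subseteq> pgl_class q N" if "\<not> q dvd j" for j N
  proof
    fix X assume "X \<in> pgl_class q (mat2_smult j N)"
    then obtain l where "\<not> q dvd l" "X = mat2_red q (mat2_smult (l * j) N)"
      by (auto elim: pgl_classE)
    with that q show "X \<in> pgl_class q N"
      unfolding pgl_class_def by (auto simp: prime_dvd_mult_iff)
  qed
  have "coprime k q"
    using q k prime_imp_coprime coprime_commute by blast
  then obtain k' where k': "[k * k' = 1] (mod q)"
    using cong_solve_coprime_int by blast
  then have "\<not> q dvd k'"
    using q by (metis cong_dvd_iff dvd_mult not_prime_unit)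
  have "pgl_class q M = pgl_class q (mat2_smult (k' * k) M)"
    using k' mat2_red_smult_cong[of "k' * k" 1 q M]
    by (metis pgl_class_red mat2_smult_1 cong_sym mult.commute)
  also have "\<dots> \<subseteq> pgl_class q (mat2_smult k M)"
    using sub[OF \<open>\<not> q dvd k'\<close>, of "mat2_smult k M"] by simp
  finally show ?thesis
    using sub[OF k] by blast
qed

lemma pgl_class_eq_iff:
  assumes "prime q"
  shows "pgl_class q A = pgl_class q B \<longleftrightarrow> (\<exists>k. \<not> q dvd k \<and> mat2_red q A = mat2_red q (mat2_smult k B))"
proof
  assume "pgl_class q A = pgl_class q B"
  then show "\<exists>k. \<not> q dvd k \<and> mat2_red q A = mat2_red q (mat2_smult k B)"
    using mat2_red_in_pgl_class[OF assms, of A] by (auto elim: pgl_classE)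
next
  assume "\<exists>k. \<not> q dvd k \<and> mat2_red q A = mat2_red q (mat2_smult k B)"
  then show "pgl_class q A = pgl_class q B"
    by (metis assms pgl_class_red pgl_class_smult)
qed

lemma pgl_class_some:
  assumes "prime q"
  obtains k where "\<not> q dvd k" "(SOME Y. Y \<in> pgl_class q M) = mat2_red q (mat2_smult k M)"
  using some_in_pgl_class[OF assms] by (rule pgl_classE)

lemma pgl_mult_class:
  assumes q: "prime q"
  shows "pgl_mult q (pgl_class q M) (pgl_class q N) = pgl_class q (mat2_mult M N)"
proof -
  obtain k j where kj: "\<not> q dvd k" "\<not> q dvd j"
    and "(SOME Y. Y \<in> pgl_class q M) = mat2_red q (mat2_smult k M)"
    and "(SOME Y. Y \<in> pgl_class q N) = mat2_red q (mat2_smult j N)"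
    using pgl_class_some[OF q] by metis
  then have "pgl_mult q (pgl_class q M) (pgl_class q N)
      = pgl_class q (mat2_mult (mat2_smult k M) (mat2_smult j N))"
    unfolding pgl_mult_def by (metis pgl_class_red mat2_red_mult)
  also have "\<dots> = pgl_class q (mat2_smult (j * k) (mat2_mult M N))"
    by simp
  also have "\<dots> = pgl_class q (mat2_mult M N)"
    using q kj by (simp add: pgl_class_smult prime_dvd_mult_iff)
  finally show ?thesis .
qed

lemma pgl_conj_class:
  assumes q: "prime q"
  shows "pgl_conj q T (pgl_class q M) = pgl_class q (mat2_mult (mat2_mult T M) (mat2_adj T))"
proof -
  obtain k where k: "\<not> q dvd k" "(SOME Y. Y \<in> pgl_class q M) = mat2_red q (mat2_smult k M)"
    using pgl_class_some[OF q] by metis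
  then have "pgl_conj q T (pgl_class q M)
      = pgl_class q (mat2_mult (mat2_mult T (mat2_smult k M)) (mat2_adj T))"
    unfolding pgl_conj_def by (metis pgl_class_red mat2_red_red mat2_red_mult)
  also have "\<dots> = pgl_class q (mat2_smult k (mat2_mult (mat2_mult T M) (mat2_adj T)))"
    by simp
  also have "\<dots> = pgl_class q (mat2_mult (mat2_mult T M) (mat2_adj T))"
    using q k(1) by (rule pgl_class_smult)
  finally show ?thesis .
qed

lemma mat2_det_in_pgl_class:
  assumes "Y \<in> pgl_class q M"
  obtains k where "\<not> q dvd k" "[mat2_det Y = k^2 * mat2_det M] (mod q)"
proof -
  obtain k where "\<not> q dvd k" "Y = mat2_red q (mat2_smult k M)"
    using assms by (rule pgl_classE)
  with that show ?thesis
    using mat2_det_red[of q "mat2_smult k M"] by (simp add: mat2_det_smult)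
qed

lemma finite_PGL2: "q > 0 \<Longrightarrow> finite (PGL2 q)"
proof -
  assume "q > 0"
  define R where "R = {0..<q} \<times> {0..<q} \<times> {0..<q} \<times> {0..<q}"
  have "pgl_class q M \<subseteq> R" for M
    unfolding pgl_class_def R_def using \<open>q > 0\<close> by (cases M rule: prod_cases4) auto
  then have "PGL2 q \<subseteq> Pow R"
    unfolding PGL2_def by blast
  moreover have "finite R"
    unfolding R_def by simp
  ultimately show ?thesis
    by (rule finite_subset[OF _ finite_Pow_iff[THEN iffD2]])
qed

section \<open>Quadratic residues and sums of two squares\<close>

lemma euler_criterion_int:
  assumes "prime (q::int)" "2 < q"
  shows "[Legendre a q = a ^ ((nat q - 1) div 2)] (mod q)"
proof -
  have "prime (nat q)"
    using assms(1) prime_int_nat_transfer by blast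
  moreover have "2 < nat q"
    using assms(2) by simp
  ultimately have "[Legendre a (int (nat q)) = a ^ ((nat q - 1) div 2)] (mod int (nat q))"
    by (rule euler_criterion)
  then show ?thesis
    using assms(2) by simp
qed

lemma sign_cong_imp_eq:
  fixes x y q :: int
  assumes "x \<in> {-1, 0, 1}" "y \<in> {-1, 0, 1}" "[x = y] (mod q)" "2 < q"
  shows "x = y"
proof (rule ccontr)
  assume "x \<noteq> y"
  moreover have "q dvd x - y"
    using assms(3) by (simp add: cong_iff_dvd_diff)
  ultimately have "\<bar>q\<bar> \<le> \<bar>x - y\<bar>"
    by (intro dvd_imp_le_int) auto
  moreover have "\<bar>x - y\<bar> \<le> 2"
    using assms(1,2) by auto
  ultimately show False
    using assms(4) by simp
qed

lemma Legendre_values: "Legendre a q \<in> {-1, 0, 1}"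
  by (simp add: Legendre_def)

lemma Legendre_cong:
  assumes "[a = b] (mod q)"
  shows "Legendre a q = Legendre b q"
proof -
  have "[a = 0] (mod q) \<longleftrightarrow> [b = 0] (mod q)" "QuadRes q a \<longleftrightarrow> QuadRes q b"
    using assms unfolding QuadRes_def by (meson cong_sym cong_trans)+
  then show ?thesis
    by (simp add: Legendre_def)
qed

lemma Legendre_mult:
  assumes "prime (q::int)" "2 < q"
  shows "Legendre (a * b) q = Legendre a q * Legendre b q"
proof (rule sign_cong_imp_eq)
  note euler = euler_criterion_int[OF assms]
  show "[Legendre (a * b) q = Legendre a q * Legendre b q] (mod q)"
    using euler[of "a * b"] cong_mult[OF euler[of a] euler[of b]]
    by (metis cong_sym cong_trans power_mult_distrib)
  show "Legendre a q * Legendre b q \<in> {-1, 0, 1}"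
    using Legendre_values[of a q] Legendre_values[of b q] by auto
qed (rule Legendre_values, rule assms(2))

lemma Legendre_square:
  assumes "prime (q::int)" "\<not> q dvd k"
  shows "Legendre (k^2) q = 1"
  using assms unfolding Legendre_def QuadRes_def
  by (auto simp: cong_0_iff prime_dvd_power_iff intro!: exI[of _ k])

lemma QuadRes_minus_one:
  assumes p: "prime (p::int)" and p4: "[p = 1] (mod 4)"
  shows "QuadRes p (-1)"
proof -
  have "p mod 4 = 1"
    using p4 by (simp add: cong_def)
  then have p_eq: "p = 4 * (p div 4) + 1"
    using div_mult_mod_eq[of p 4] by linarith
  have "p \<noteq> 2"
    using \<open>p mod 4 = 1\<close> by auto
  then have "2 < p"
    using prime_ge_2_int[OF p] by simp
  have "(nat p - 1) div 2 = 2 * nat (p div 4)"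
    using \<open>2 < p\<close> by (subst p_eq) (simp add: nat_mult_distrib)
  then have "[Legendre (-1) p = 1] (mod p)"
    using euler_criterion_int[OF p \<open>2 < p\<close>, of "-1"] by simp
  then have "Legendre (-1) p = 1"
    using \<open>2 < p\<close> by (intro sign_cong_imp_eq) (auto simp: Legendre_def)
  then show ?thesis
    by (simp add: Legendre_def split: if_splits)
qed

lemma dvd_square_less_imp_zero:
  fixes a q :: int
  assumes "q dvd a" "a^2 < q^2"
  shows "a = 0"
proof (rule ccontr)
  assume "a \<noteq> 0"
  then have "\<bar>q\<bar> \<le> \<bar>a\<bar>"
    using assms(1) by (rule dvd_imp_le_int)
  then have "q^2 \<le> a^2"
    by (metis abs_ge_zero power2_abs power_mono)
  then show False
    using assms(2) by simp
qed

text \<open>Thue's argument: among the (m+1)^2 > p pairs (u, v) with 0 \<le> u, v \<le> m = \<lfloor>\<surd>p\<rfloor>,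
  two agree in u - x v mod p, where x^2 = -1 mod p; their difference (a, b) satisfies
  p | a^2 + b^2 < 2 p.\<close>

lemma prime_sum_two_squares:
  assumes p: "prime (p::int)" and p4: "[p = 1] (mod 4)"
  obtains a b where "p = a^2 + b^2"
proof -
  obtain x where x: "[x^2 = -1] (mod p)"
    using QuadRes_minus_one[OF assms] unfolding QuadRes_def by blast
  have p1: "p > 1"
    using p by (simp add: prime_gt_1_int)
  obtain n where n: "n^2 \<le> nat p" "nat p < (Suc n)^2"
    using floor_sqrt_power2_le Suc_floor_sqrt_power2_gt by blast
  define m where "m = int n"
  have "m^2 \<le> p" "p < (m + 1)^2"
    using n p1 unfolding m_def by (simp_all add: le_nat_iff nat_less_iff add.commute)
  moreover have "m^2 \<noteq> p"
    using p prime_power_iff[of m 2] by fastforce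
  ultimately have m_sq: "m^2 < p" "p < (m + 1)^2"
    by simp_all
  define D where "D = {0..m} \<times> {0..m}"
  define f where "f = (\<lambda>(u, v). (u - x * v) mod p)"
  have "\<not> inj_on f D"
  proof
    assume "inj_on f D"
    moreover have "f ` D \<subseteq> {0..<p}"
      unfolding f_def using p1 by auto
    ultimately have "card D \<le> card {0..<p}"
      by (intro card_inj_on_le) auto
    moreover have "card D = nat ((m + 1)^2)"
      unfolding D_def m_def by (simp add: power2_eq_square nat_mult_distrib)
    ultimately show False
      using m_sq p1 by (simp add: nat_le_eq_zle)
  qed
  then obtain u1 v1 u2 v2 where uv: "(u1, v1) \<in> D" "(u2, v2) \<in> D" "(u1, v1) \<noteq> (u2, v2)"
    "f (u1, v1) = f (u2, v2)"
    unfolding inj_on_def by auto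
  define a where "a = u1 - u2"
  define b where "b = v1 - v2"
  have "[a = x * b] (mod p)"
    using uv(4) unfolding f_def a_def b_def by (simp add: cong_def mod_eq_dvd_iff algebra_simps)
  then have "[a^2 = x^2 * b^2] (mod p)"
    by (metis cong_pow power_mult_distrib)
  also have "[x^2 * b^2 = -1 * b^2] (mod p)"
    using x by (rule cong_scalar_right)
  finally have "p dvd a^2 + b^2"
    by (simp add: cong_iff_dvd_diff)
  then obtain c where c: "a^2 + b^2 = p * c" ..
  have "\<bar>a\<bar> \<le> m" "\<bar>b\<bar> \<le> m"
    using uv(1,2) unfolding D_def a_def b_def by auto
  then have "a^2 \<le> m^2" "b^2 \<le> m^2"
    unfolding m_def by (simp_all add: power2_le_iff_abs_le)
  then have "p * c < p * 2"
    using c m_sq by simp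
  moreover have "a \<noteq> 0 \<or> b \<noteq> 0"
    using uv(3) unfolding a_def b_def by auto
  then have "0 < p * c"
    by (simp flip: c add: sum_power2_gt_zero_iff)
  ultimately have "c = 1"
    using p1 by (simp add: zero_less_mult_iff)
  with c show ?thesis
    by (intro that[of a b]) simp
qed

lemma prime_sum_two_squares_odd_even:
  assumes "prime (p::int)" "[p = 1] (mod 4)"
  obtains a b where "p = a^2 + b^2" "odd a" "even b"
proof -
  obtain a b where ab: "p = a^2 + b^2"
    using prime_sum_two_squares[OF assms] .
  have "odd p"
    using assms(2) by (metis cong_def dvd_mod_iff even_numeral odd_one)
  then consider "odd a" "even b" | "even a" "odd b"
    unfolding ab by fastforce
  then show ?thesis
  proof cases
    case 1
    with ab show ?thesis by (rule that)
  next
    case 2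
    with ab show ?thesis by (intro that[of b a]) (simp_all add: add.commute)
  qed
qed

section \<open>Loops in C(G, S) and in its twists\<close>

lemma SpqE:
  assumes "s \<in> Spq p q i"
  obtains a0 a1 a2 a3 where "s = pgl_class q (a0 + i*a1, a2 + i*a3, -a2 + i*a3, a0 - i*a1)"
    "a0^2 + a1^2 + a2^2 + a3^2 = p" "even (a0 - 1)" "even a1" "even a2" "even a3"
  using assms unfolding Spq_def by blast

lemma finite_Spq: "finite (Spq p q i)"
proof -
  have bound: "\<bar>a\<bar> \<le> p" if "a^2 \<le> p" for a :: int
  proof (cases "a = 0")
    case False
    then have "\<bar>a\<bar> \<le> \<bar>a\<bar>^2"
      by (intro self_le_power) auto
    with that show ?thesis
      by simp
  qed (use that in simp)
  define F where "F = (\<lambda>(a0, a1, a2, a3). pgl_class q (a0 + i*a1, a2 + i*a3, -a2 + i*a3, a0 - i*a1))"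
  have "Spq p q i \<subseteq> F ` ({-p..p} \<times> {-p..p} \<times> {-p..p} \<times> {-p..p})"
  proof
    fix s assume "s \<in> Spq p q i"
    then obtain a0 a1 a2 a3 where s: "s = F (a0, a1, a2, a3)" and sum: "a0^2 + a1^2 + a2^2 + a3^2 = p"
      unfolding F_def by (auto elim: SpqE)
    have "a0^2 \<le> p" "a1^2 \<le> p" "a2^2 \<le> p" "a3^2 \<le> p"
      using sum zero_le_power2[of a0] zero_le_power2[of a1] zero_le_power2[of a2]
        zero_le_power2[of a3] by linarith+
    then have "\<bar>a0\<bar> \<le> p" "\<bar>a1\<bar> \<le> p" "\<bar>a2\<bar> \<le> p" "\<bar>a3\<bar> \<le> p"
      using bound by blast+
    then show "s \<in> F ` ({-p..p} \<times> {-p..p} \<times> {-p..p} \<times> {-p..p})"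
      unfolding s by (intro imageI) (auto simp: abs_le_iff)
  qed
  then show ?thesis
    by (rule finite_subset) auto
qed

lemma mat2_det_Spq_generator:
  assumes "[i^2 = -1] (mod q)" "a0^2 + a1^2 + a2^2 + a3^2 = p"
  shows "[mat2_det (a0 + i*a1, a2 + i*a3, -a2 + i*a3, a0 - i*a1) = p] (mod q)"
proof -
  have "mat2_det (a0 + i*a1, a2 + i*a3, -a2 + i*a3, a0 - i*a1) - p = - ((i^2 + 1) * (a1^2 + a3^2))"
    using assms(2) by (simp add: power2_eq_square algebra_simps)
  moreover have "q dvd i^2 + 1"
    using assms(1) by (simp add: cong_iff_dvd_diff)
  ultimately show ?thesis
    by (simp add: cong_iff_dvd_diff)
qed

lemma pgl_class_mult_fixed_imp_scalar:
  assumes q: "prime q" and M: "\<not> q dvd mat2_det M"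
    and fixed: "pgl_class q (mat2_mult M (a, b, c, d)) = pgl_class q M"
  shows "q dvd b" "q dvd c" "q dvd a - d"
proof -
  define D where "D = mat2_det M"
  obtain k where k: "\<not> q dvd k" "mat2_red q M = mat2_red q (mat2_smult k (mat2_mult M (a, b, c, d)))"
    using fixed pgl_class_eq_iff[OF q] by metis
  have "mat2_red q (mat2_mult (mat2_adj M) M)
      = mat2_red q (mat2_mult (mat2_adj M) (mat2_smult k (mat2_mult M (a, b, c, d))))"
    using k(2) by (metis mat2_red_mult mat2_red_red)
  then have "mat2_red q (D, 0, 0, D) = mat2_red q (mat2_smult (k * D) (a, b, c, d))"
    unfolding D_def by (simp flip: mat2_mult_assoc add: mat2_mult_adj_left mult.assoc)
  then have "[k * D * b = 0] (mod q)" "[k * D * c = 0] (mod q)" "[k * D * a = k * D * d] (mod q)"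
    by (auto simp: cong_def mult.assoc)
  then have "q dvd k * D * b" "q dvd k * D * c" "q dvd k * D * (a - d)"
    by (simp_all add: cong_0_iff cong_iff_dvd_diff right_diff_distrib)
  then show "q dvd b" "q dvd c" "q dvd a - d"
    using q k(1) M unfolding D_def by (simp_all add: prime_dvd_mult_iff)
qed

lemma not_dvd_if_square_eq_minus_one:
  assumes "prime (q::int)" "[i^2 = -1] (mod q)"
  shows "\<not> q dvd i"
proof
  assume "q dvd i"
  then have "q dvd i^2"
    by (simp add: power2_eq_square)
  moreover have "q dvd i^2 + 1"
    using assms(2) by (simp add: cong_iff_dvd_diff)
  ultimately have "q dvd 1"
    by (simp add: dvd_add_right_iff)
  then show False
    using not_prime_unit assms(1) by blast
qed

lemma cayley_adj_Spq_no_loop: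
  assumes p: "prime p" and q: "prime q" "p < q" and i: "[i^2 = -1] (mod q)"
    and M: "\<not> q dvd mat2_det M"
  shows "cayley_adj q (Spq p q i) (pgl_class q M) (pgl_class q M) = 0"
proof -
  have no_fix: "pgl_mult q (pgl_class q M) s \<noteq> pgl_class q M" if s: "s \<in> Spq p q i" for s
  proof
    assume fix_s: "pgl_mult q (pgl_class q M) s = pgl_class q M"
    obtain a0 a1 a2 a3 where s: "s = pgl_class q (a0 + i*a1, a2 + i*a3, -a2 + i*a3, a0 - i*a1)"
      and sum: "a0^2 + a1^2 + a2^2 + a3^2 = p"
      using s by (rule SpqE)
    have d: "q dvd a2 + i*a3" "q dvd -a2 + i*a3" "q dvd (a0 + i*a1) - (a0 - i*a1)"
      using pgl_class_mult_fixed_imp_scalar[OF q(1) M] fix_s unfolding s pgl_mult_class[OF q(1)]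
      by blast+
    have "(a2 + i*a3) - (-a2 + i*a3) = 2 * a2" "(a2 + i*a3) + (-a2 + i*a3) = 2 * i * a3"
      "(a0 + i*a1) - (a0 - i*a1) = 2 * i * a1"
      by simp_all
    then have "q dvd 2 * a2" "q dvd 2 * i * a3" "q dvd 2 * i * a1"
      using dvd_diff[OF d(1,2)] dvd_add[OF d(1,2)] d(3) by metis+
    moreover have "\<not> q dvd 2"
      using q(2) prime_ge_2_int[OF p] by (intro zdvd_not_zless) auto
    moreover have "\<not> q dvd i"
      using q(1) i by (rule not_dvd_if_square_eq_minus_one)
    ultimately have "q dvd a1" "q dvd a2" "q dvd a3"
      using q(1) by (simp_all add: prime_dvd_mult_iff)
    moreover have "p < q^2"
      using q(2) self_le_power[of q 2] prime_gt_1_int[OF q(1)] by simp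
    then have "a1^2 < q^2" "a2^2 < q^2" "a3^2 < q^2"
      using sum zero_le_power2[of a0] zero_le_power2[of a1] zero_le_power2[of a2]
        zero_le_power2[of a3] by linarith+
    ultimately have "a1 = 0" "a2 = 0" "a3 = 0"
      by (simp_all add: dvd_square_less_imp_zero)
    then have "p = a0^2"
      using sum by simp
    then show False
      using p prime_power_iff[of a0 2] by simp
  qed
  then have "{s \<in> Spq p q i. pgl_mult q (pgl_class q M) s = pgl_class q M} = {}"
    by blast
  then show ?thesis
    unfolding cayley_adj_def by (simp only: card.empty)
qed

lemma graph_iso_loop_free:
  assumes "graph_iso V A B" and "\<And>x. x \<in> V \<Longrightarrow> A x x = 0" and "y \<in> V"
  shows "B y y = 0"
proof -
  obtain f where f: "bij_betw f V V" and AB: "\<And>x y. x \<in> V \<Longrightarrow> y \<in> V \<Longrightarrow> B (f x) (f y) = A x y"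
    using assms(1) unfolding graph_iso_def by blast
  obtain x where "x \<in> V" "y = f x"
    using f assms(3) by (metis bij_betw_imp_surj_on imageE)
  then show ?thesis
    using AB assms(2) by simp
qed

lemma diag_conj_mult_eq_smult:
  fixes a b c n q :: int
  assumes "[c^2 = a^2 + b^2] (mod q)"
  defines "X \<equiv> (b, a - c, n * b, n * (a + c))"
  shows "mat2_red q (mat2_mult (mat2_mult (-1, 0, 0, 1) (mat2_mult X (a, b, -b, a))) (mat2_adj (-1, 0, 0, 1)))
    = mat2_red q (mat2_smult (-c) X)"
proof -
  have "mat2_mult (mat2_mult (-1, 0, 0, 1) (mat2_mult X (a, b, -b, a))) (mat2_adj (-1, 0, 0, 1))
      = (-c * b, (a^2 + b^2) - a * c, -c * (n * b), -n * ((a^2 + b^2) + a * c))"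
    unfolding X_def by (simp add: algebra_simps power2_eq_square)
  moreover have "[(a^2 + b^2) - a * c = -c * (a - c)] (mod q)"
    using cong_diff[OF cong_sym[OF assms(1)] cong_refl[of "a * c"]]
    by (simp add: algebra_simps power2_eq_square)
  moreover have "[-n * ((a^2 + b^2) + a * c) = -c * (n * (a + c))] (mod q)"
    using cong_mult[OF cong_refl[of "-n"] cong_add[OF cong_sym[OF assms(1)] cong_refl[of "a * c"]]]
    by (simp add: algebra_simps power2_eq_square)
  ultimately show ?thesis
    unfolding X_def by (simp only: mat2_smult.simps) (intro mat2_red_cong cong_refl)
qed

lemma twisted_adj_Spq_loop:
  assumes p: "prime p" "[p = 1] (mod 4)" and q: "prime q" "p < q" and QR: "QuadRes q p"
  obtains x where "x \<in> PSL2 q" "twisted_adj q (-1, 0, 0, 1) (Spq p q i) x x \<noteq> 0"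
proof -
  obtain a b where ab: "p = a^2 + b^2" "odd a" "even b"
    using prime_sum_two_squares_odd_even[OF p] .
  obtain c where c: "[c^2 = p] (mod q)"
    using QR unfolding QuadRes_def by blast
  have "p < q^2"
    using q(2) self_le_power[of q 2] prime_gt_1_int[OF q(1)] by simp
  have "b \<noteq> 0"
    using ab(1) p(1) prime_power_iff[of a 2] by auto
  moreover have "b^2 < q^2"
    using ab(1) \<open>p < q^2\<close> zero_le_power2[of a] by linarith
  ultimately have "\<not> q dvd b"
    using dvd_square_less_imp_zero by blast
  have "\<not> q dvd c"
  proof
    assume "q dvd c"
    then have "q dvd c^2"
      by (simp add: power2_eq_square)
    moreover have "q dvd c^2 - p"
      using c by (simp add: cong_iff_dvd_diff)
    ultimately have "q dvd c^2 - (c^2 - p)"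
      by (rule dvd_diff)
    then show False
      using q(2) prime_gt_0_int[OF p(1)] zdvd_not_zless[of p q] by simp
  qed
  have "\<not> q dvd 2"
    using q(2) prime_ge_2_int[OF p(1)] by (intro zdvd_not_zless) auto
  \<comment> \<open>This choice of \<nu> makes det X = \<nu>^2 a nonzero square, so that X lies in PSL_2.\<close>
  define \<nu> where "\<nu> = 2 * b * c"
  define X where "X = (b, a - c, \<nu> * b, \<nu> * (a + c))"
  define s where "s = pgl_class q (a, b, -b, a)"
  have "\<not> q dvd \<nu>"
    unfolding \<nu>_def using q(1) \<open>\<not> q dvd 2\<close> \<open>\<not> q dvd b\<close> \<open>\<not> q dvd c\<close>
    by (simp add: prime_dvd_mult_iff)
  moreover have det_X: "mat2_det X = \<nu>^2"
    unfolding X_def \<nu>_def by (simp add: power2_eq_square algebra_simps)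
  ultimately have "\<not> q dvd mat2_det X"
    using q(1) by (simp add: prime_dvd_power_iff)
  moreover have "QuadRes q (mat2_det X)"
    unfolding QuadRes_def det_X by (blast intro: cong_refl)
  ultimately have x: "pgl_class q X \<in> PSL2 q"
    unfolding PSL2_def by blast
  have "s = pgl_class q (a + i*0, b + i*0, -b + i*0, a - i*0)"
    unfolding s_def by simp
  moreover have "a^2 + 0^2 + b^2 + 0^2 = p" "even (a - 1)"
    using ab by simp_all
  ultimately have s_in: "s \<in> Spq p q i"
    unfolding Spq_def using ab(3) by blast
  have "pgl_class q (mat2_mult (mat2_mult (-1, 0, 0, 1) (mat2_mult X (a, b, -b, a)))
      (mat2_adj (-1, 0, 0, 1))) = pgl_class q (mat2_smult (-c) X)"
    using diag_conj_mult_eq_smult[of c a b q \<nu>] c unfolding X_def ab(1) by (metis pgl_class_red)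
  also have "\<dots> = pgl_class q X"
    using q(1) \<open>\<not> q dvd c\<close> by (simp add: pgl_class_smult)
  finally have loop: "pgl_class q (mat2_mult (mat2_mult (-1, 0, 0, 1) (mat2_mult X (a, b, -b, a)))
      (mat2_adj (-1, 0, 0, 1))) = pgl_class q X" .
  define L where "L = {t \<in> Spq p q i. pgl_conj q (-1, 0, 0, 1) (pgl_mult q (pgl_class q X) t) = pgl_class q X}"
  have "s \<in> L"
    using s_in loop unfolding s_def L_def
    by (simp add: pgl_mult_class[OF q(1)] pgl_conj_class[OF q(1)])
  moreover have "finite L"
    unfolding L_def using finite_Spq by simp
  ultimately have "card L \<noteq> 0"
    using card_0_eq by blast
  then have "twisted_adj q (-1, 0, 0, 1) (Spq p q i) (pgl_class q X) (pgl_class q X) \<noteq> 0"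
    unfolding twisted_adj_def L_def .
  with x show ?thesis
    by (rule that)
qed

lemma PSL2_cayley_not_iso_twisted:
  assumes p: "prime p" "[p = 1] (mod 4)" and q: "prime q" "p < q"
    and i: "[i^2 = -1] (mod q)" and QR: "QuadRes q p"
  shows "\<not> graph_iso (PSL2 q) (cayley_adj q (Spq p q i)) (twisted_adj q (-1, 0, 0, 1) (Spq p q i))"
proof
  assume iso: "graph_iso (PSL2 q) (cayley_adj q (Spq p q i)) (twisted_adj q (-1, 0, 0, 1) (Spq p q i))"
  have no_loop: "cayley_adj q (Spq p q i) x x = 0" if "x \<in> PSL2 q" for x
  proof -
    obtain M where "x = pgl_class q M" "\<not> q dvd mat2_det M"
      using \<open>x \<in> PSL2 q\<close> unfolding PSL2_def by blast
    then show ?thesis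
      using cayley_adj_Spq_no_loop[OF p(1) q i] by simp
  qed
  obtain x where x: "x \<in> PSL2 q" and loop: "twisted_adj q (-1, 0, 0, 1) (Spq p q i) x x \<noteq> 0"
    using twisted_adj_Spq_loop[OF p q QR] .
  then show False
    using graph_iso_loop_free[OF iso no_loop x] by simp
qed

section \<open>Spectra of bipartite graphs\<close>

lemma smult_sum_right: "smult c (\<Sum>x\<in>A. f x) = (\<Sum>x\<in>A. smult c (f x))"
  by (induction A rule: infinite_finite_induct) (simp_all add: smult_add_right)

lemma pcompose_char_poly_factor_reflect:
  fixes e :: "'v \<Rightarrow> complex" and A :: "'v \<Rightarrow> 'v \<Rightarrow> nat"
  assumes e: "e x = 1 \<or> e x = -1" "e y = 1 \<or> e y = -1"
    and bip: "A x y \<noteq> 0 \<Longrightarrow> e x = - e y" and loop_free: "A x x = 0"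
  shows "pcompose ((if y = x then [:0, 1:] else 0) - [:of_nat (A x y):]) [:0, -1:]
       = smult (- (e x * e y)) ((if y = x then [:0, 1:] else 0) - [:of_nat (A x y):])"
proof -
  consider (diag) "y = x" | (edge) "y \<noteq> x" "A x y \<noteq> 0" | (none) "y \<noteq> x" "A x y = 0"
    by blast
  then show ?thesis
  proof cases
    case diag
    then have "e x * e y = 1"
      using e by auto
    with diag loop_free show ?thesis
      by (simp add: pcompose_pCons)
  next
    case edge
    then have "e x * e y = -1"
      using bip e by auto
    with edge show ?thesis
      by simp
  qed simp
qed

lemma prod_sign_permutes:
  fixes e :: "'v \<Rightarrow> complex"
  assumes "\<pi> permutes V" and "\<And>x. x \<in> V \<Longrightarrow> e x = 1 \<or> e x = -1"
  shows "(\<Prod>x\<in>V. - (e x * e (\<pi> x))) = (-1) ^ card V"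
proof -
  have "(\<Prod>x\<in>V. - (e x * e (\<pi> x))) = (\<Prod>x\<in>V. (-1) * (e x * e (\<pi> x)))"
    by simp
  also have "\<dots> = (-1) ^ card V * ((\<Prod>x\<in>V. e x) * (\<Prod>x\<in>V. e (\<pi> x)))"
    by (simp only: prod.distrib prod_constant)
  also have "(\<Prod>x\<in>V. e (\<pi> x)) = (\<Prod>x\<in>V. e x)"
    using prod.permute[OF assms(1), of e] by (simp add: comp_def)
  also have "(\<Prod>x\<in>V. e x) * (\<Prod>x\<in>V. e x) = (\<Prod>x\<in>V. e x * e x)"
    by (simp add: prod.distrib)
  also have "\<dots> = 1"
  proof (rule prod.neutral, intro ballI)
    show "e x * e x = 1" if "x \<in> V" for x
      using assms(2)[OF that] by auto
  qed
  finally show ?thesis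
    by simp
qed

text \<open>For an adjacency function A that is bipartite with respect to a colouring e by \<plusminus>1,
  substituting -X into a term of the Leibniz formula multiplies each factor by -e x e (\<pi> x),
  and these signs multiply to (-1)^n.\<close>

lemma pcompose_char_poly_term_bipartite:
  fixes e :: "'v \<Rightarrow> complex" and A :: "'v \<Rightarrow> 'v \<Rightarrow> nat"
  assumes \<pi>: "\<pi> permutes V" and e: "\<And>x. x \<in> V \<Longrightarrow> e x = 1 \<or> e x = -1"
    and bip: "\<And>x y. x \<in> V \<Longrightarrow> y \<in> V \<Longrightarrow> A x y \<noteq> 0 \<Longrightarrow> e x = - e y"
  defines "P \<equiv> \<Prod>x\<in>V. (if \<pi> x = x then [:0, 1:] else 0) - [:of_nat (A x (\<pi> x)) :: complex:]"
  shows "pcompose P [:0, -1:] = smult ((-1) ^ card V) P"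
proof -
  have loop_free: "A x x = 0" if "x \<in> V" for x
  proof (rule ccontr)
    assume "A x x \<noteq> 0"
    then have "e x = - e x"
      using bip that by blast
    then show False
      using e[OF that] by auto
  qed
  have "pcompose P [:0, -1:]
      = (\<Prod>x\<in>V. smult (- (e x * e (\<pi> x))) ((if \<pi> x = x then [:0, 1:] else 0) - [:of_nat (A x (\<pi> x)):]))"
    unfolding P_def pcompose_prod
  proof (rule prod.cong[OF refl])
    fix x assume x: "x \<in> V"
    then have "\<pi> x \<in> V"
      using \<pi> by (simp add: permutes_in_image)
    with x show "pcompose ((if \<pi> x = x then [:0, 1:] else 0) - [:of_nat (A x (\<pi> x)):]) [:0, -1:]
        = smult (- (e x * e (\<pi> x))) ((if \<pi> x = x then [:0, 1:] else 0) - [:of_nat (A x (\<pi> x)):])"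
      by (intro pcompose_char_poly_factor_reflect e bip loop_free)
  qed
  also have "\<dots> = smult (\<Prod>x\<in>V. - (e x * e (\<pi> x))) P"
    unfolding P_def by (rule prod_smult)
  also have "(\<Prod>x\<in>V. - (e x * e (\<pi> x))) = (-1) ^ card V"
    by (rule prod_sign_permutes[OF \<pi> e])
  finally show ?thesis .
qed

lemma pcompose_char_poly_adj_bipartite:
  fixes e :: "'v \<Rightarrow> complex" and A :: "'v \<Rightarrow> 'v \<Rightarrow> nat"
  assumes e: "\<And>x. x \<in> V \<Longrightarrow> e x = 1 \<or> e x = -1"
    and bip: "\<And>x y. x \<in> V \<Longrightarrow> y \<in> V \<Longrightarrow> A x y \<noteq> 0 \<Longrightarrow> e x = - e y"
  shows "pcompose (char_poly_adj V A) [:0, -1:] = smult ((-1) ^ card V) (char_poly_adj V A)"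
proof -
  define P where "P \<pi> = (\<Prod>x\<in>V. (if \<pi> x = x then [:0, 1:] else 0) - [:of_nat (A x (\<pi> x)) :: complex:])"
    for \<pi>
  have "pcompose (smult (of_int (sign \<pi>)) (P \<pi>)) [:0, -1:]
      = smult ((-1) ^ card V) (smult (of_int (sign \<pi>)) (P \<pi>))" if "\<pi> permutes V" for \<pi>
    using pcompose_char_poly_term_bipartite[OF that e bip] unfolding P_def
    by (simp add: pcompose_smult mult.commute)
  then show ?thesis
    unfolding char_poly_adj_def P_def[symmetric] of_int_poly smult_sum_right pcompose_sum
    by (intro sum.cong) simp_all
qed

lemma proots_pcompose_linear_factors:
  "proots (pcompose (\<Prod>x\<in>#R. [:-x, 1:]) [:0, -1:]) = image_mset uminus (R :: complex multiset)"
proof (induction R)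
  case empty
  show ?case by (simp add: pcompose_1)
next
  case (add x R)
  have lin: "pcompose [:-x, 1:] [:0, -1:] = smult (-1) [:x, 1:]" by (simp add: pcompose_pCons)
  have nz1: "smult (-1) [:x, 1:] \<noteq> (0 :: complex poly)" by simp
  have nz2: "pcompose (\<Prod>x\<in>#R. [:-x, 1:]) [:0, -1:] \<noteq> 0"
  proof
    assume "pcompose (\<Prod>x\<in>#R. [:-x, 1:]) [:0, -1:] = 0"
    hence "(\<Prod>x\<in>#R. [:-x, 1:]) = (0 :: complex poly)" by (rule pcompose_eq_0) simp
    thus False by (auto simp: prod_mset_zero_iff)
  qed
  have "pcompose (\<Prod>x\<in>#add_mset x R. [:-x, 1:]) [:0, -1:]
      = smult (-1) [:x, 1:] * pcompose (\<Prod>x\<in>#R. [:-x, 1:]) [:0, -1:]"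
  proof -
    have "(\<Prod>x\<in>#add_mset x R. [:-x, 1:]) = [:-x, 1:] * (\<Prod>x\<in>#R. [:-x, 1:])" by simp
    thus ?thesis by (simp only: pcompose_mult lin)
  qed
  hence "proots (pcompose (\<Prod>x\<in>#add_mset x R. [:-x, 1:]) [:0, -1:])
      = proots (smult (-1) [:x, 1:]) + proots (pcompose (\<Prod>x\<in>#R. [:-x, 1:]) [:0, -1:])"
    using proots_mult[OF nz1 nz2] by simp
  moreover have "proots (smult (-1) [:x, 1:]) = {#-x#}" by (subst proots_smult) simp_all
  ultimately have "proots (pcompose (\<Prod>x\<in>#add_mset x R. [:-x, 1:]) [:0, -1:]) = {#-x#} + image_mset uminus R"
    using add.IH by (simp only:)
  thus ?case by simp
qed

lemma proots_pcompose_uminus: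
  fixes P :: "complex poly"
  shows "proots (pcompose P [:0, -1:]) = image_mset uminus (proots P)"
proof (cases "P = 0")
  case False
  have "pcompose P [:0, -1:] = smult (lead_coeff P) (pcompose (\<Prod>x\<in>#proots P. [:-x, 1:]) [:0, -1:])"
    by (subst (1) complex_poly_decompose_multiset[symmetric]) (simp add: pcompose_smult)
  with False show ?thesis
    by (simp add: proots_pcompose_linear_factors)
qed simp

lemma symmetric_spectrum_adj_bipartite:
  fixes e :: "'v \<Rightarrow> complex" and A :: "'v \<Rightarrow> 'v \<Rightarrow> nat"
  assumes "\<And>x. x \<in> V \<Longrightarrow> e x = 1 \<or> e x = -1"
    and "\<And>x y. x \<in> V \<Longrightarrow> y \<in> V \<Longrightarrow> A x y \<noteq> 0 \<Longrightarrow> e x = - e y"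
  shows "symmetric_mset (spectrum_adj V A)"
proof -
  have "proots (pcompose (char_poly_adj V A) [:0, -1:]) = proots (char_poly_adj V A)"
    by (simp add: pcompose_char_poly_adj_bipartite[OF assms])
  then show ?thesis
    unfolding symmetric_mset_def spectrum_adj_def by (simp add: proots_pcompose_uminus)
qed

lemma degree_char_poly_term_le:
  assumes fin: "finite V"
  shows "degree (\<Prod>x\<in>V. (if \<pi> x = x then [:0, 1:] else 0) - [:of_nat (A x (\<pi> x)) :: complex:])
    \<le> card {x\<in>V. \<pi> x = x}"
proof -
  have "degree (\<Prod>x\<in>V. (if \<pi> x = x then [:0, 1:] else 0) - [:of_nat (A x (\<pi> x)) :: complex:])
      \<le> (\<Sum>x\<in>V. degree ((if \<pi> x = x then [:0, 1:] else 0) - [:of_nat (A x (\<pi> x)) :: complex:]))"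
    using degree_prod_sum_le[OF fin] by (simp add: comp_def)
  also have "\<dots> \<le> (\<Sum>x\<in>V. if \<pi> x = x then 1 else 0)"
    by (intro sum_mono) simp
  also have "\<dots> = card {x\<in>V. \<pi> x = x}"
    using fin by (simp add: sum.If_cases Int_def conj_commute)
  finally show ?thesis .
qed

lemma degree_char_poly_adj:
  fixes A :: "'v \<Rightarrow> 'v \<Rightarrow> nat"
  assumes fin: "finite V"
  shows "degree (char_poly_adj V A) = card V"
proof -
  define F where "F \<pi> = of_int (sign \<pi>) *
      (\<Prod>x\<in>V. (if \<pi> x = x then [:0, 1:] else 0) - [:of_nat (A x (\<pi> x)) :: complex:])" for \<pi>
  have deg_F: "degree (F \<pi>) \<le> card {x\<in>V. \<pi> x = x}" for \<pi>
    unfolding F_def of_int_poly using degree_char_poly_term_le[OF fin, of \<pi> A] by simp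
  have "F id = (\<Prod>x\<in>V. [:- of_nat (A x x), 1:])"
    unfolding F_def by simp
  then have coeff_id: "coeff (F id) (card V) = 1"
    using lead_coeff_prod[of "\<lambda>x. [:- of_nat (A x x) :: complex, 1:]" V]
    by (simp add: degree_prod_eq_sum_degree)
  have coeff_other: "coeff (F \<pi>) (card V) = 0" if \<pi>: "\<pi> permutes V" and "\<pi> \<noteq> id" for \<pi>
  proof -
    obtain x where "\<pi> x \<noteq> x"
      using \<open>\<pi> \<noteq> id\<close> by (auto simp: fun_eq_iff)
    moreover have "x \<in> V"
      using calculation permutes_not_in[OF \<pi>] by blast
    ultimately have "card {x\<in>V. \<pi> x = x} < card V"
      using fin by (intro psubset_card_mono) auto
    then show ?thesis
      using deg_F[of \<pi>] by (intro coeff_eq_0) simp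
  qed
  have "coeff (char_poly_adj V A) (card V) = (\<Sum>\<pi>\<in>{\<pi>. \<pi> permutes V}. coeff (F \<pi>) (card V))"
    unfolding char_poly_adj_def F_def by (simp add: coeff_sum)
  also have "\<dots> = coeff (F id) (card V) + (\<Sum>\<pi>\<in>{\<pi>. \<pi> permutes V} - {id}. coeff (F \<pi>) (card V))"
    using finite_permutations[OF fin] by (rule sum.remove) (simp add: permutes_id)
  also have "\<dots> = 1"
    using coeff_id coeff_other by simp
  finally have "card V \<le> degree (char_poly_adj V A)"
    by (intro le_degree) simp
  moreover have "degree (F \<pi>) \<le> card V" for \<pi>
    using order.trans[OF deg_F card_mono[OF fin]] by blast
  then have "degree (char_poly_adj V A) \<le> card V"
    unfolding char_poly_adj_def F_def[symmetric] using finite_permutations[OF fin]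
    by (intro degree_sum_le)
  ultimately show ?thesis
    by simp
qed

lemma size_spectrum_adj: "finite V \<Longrightarrow> size (spectrum_adj V A) = card V"
  unfolding spectrum_adj_def by (simp add: size_proots_complex degree_char_poly_adj)

section \<open>The Legendre symbol of the determinant on PGL_2\<close>

lemma Legendre_det_pgl_class:
  assumes q: "prime q" "2 < q" and Y: "Y \<in> pgl_class q M"
  shows "Legendre (mat2_det Y) q = Legendre (mat2_det M) q"
proof -
  obtain k where "\<not> q dvd k" "[mat2_det Y = k^2 * mat2_det M] (mod q)"
    using Y by (rule mat2_det_in_pgl_class)
  then show ?thesis
    by (simp add: Legendre_cong Legendre_mult[OF q] Legendre_square[OF q(1)])
qed

definition pgl_det_Legendre :: "int \<Rightarrow> mat2 set \<Rightarrow> int" where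
  "pgl_det_Legendre q x = Legendre (mat2_det (SOME M. M \<in> x)) q"

lemma pgl_det_Legendre_class:
  assumes "prime q" "2 < q"
  shows "pgl_det_Legendre q (pgl_class q M) = Legendre (mat2_det M) q"
  unfolding pgl_det_Legendre_def using assms some_in_pgl_class[OF assms(1)]
  by (rule Legendre_det_pgl_class)

lemma pgl_det_Legendre_PGL2:
  assumes "prime q" "2 < q" "x \<in> PGL2 q"
  shows "pgl_det_Legendre q x = 1 \<or> pgl_det_Legendre q x = -1"
proof -
  obtain M where "x = pgl_class q M" "\<not> q dvd mat2_det M"
    using assms(3) unfolding PGL2_def by blast
  then show ?thesis
    using pgl_det_Legendre_class[OF assms(1,2)] by (simp add: Legendre_def cong_0_iff)
qed

lemma pgl_det_Legendre_mult_Spq: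
  assumes p: "prime p" and q: "prime q" "p < q" and nQR: "\<not> QuadRes q p"
    and i: "[i^2 = -1] (mod q)" and s: "s \<in> Spq p q i"
  shows "pgl_det_Legendre q (pgl_mult q (pgl_class q M) s) = - pgl_det_Legendre q (pgl_class q M)"
proof -
  have q2: "2 < q"
    using q(2) prime_ge_2_int[OF p] by simp
  obtain N where N: "s = pgl_class q N" "[mat2_det N = p] (mod q)"
    using s mat2_det_Spq_generator[OF i] by (metis SpqE)
  have "\<not> [p = 0] (mod q)"
    using zdvd_not_zless[of p q] q(2) prime_gt_0_int[OF p] by (simp add: cong_0_iff)
  have "Legendre (mat2_det N) q = Legendre p q"
    using N(2) by (rule Legendre_cong)
  also have "\<dots> = -1"
    using \<open>\<not> [p = 0] (mod q)\<close> nQR by (simp add: Legendre_def)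
  finally have "Legendre (mat2_det N) q = -1" .
  then show ?thesis
    unfolding N(1) pgl_mult_class[OF q(1)] pgl_det_Legendre_class[OF q(1) q2]
    by (simp add: mat2_det_mult Legendre_mult[OF q(1) q2])
qed

lemma PGL2_cayley_spectrum_symmetric:
  assumes p: "prime p" and q: "prime q" "p < q" and nQR: "\<not> QuadRes q p"
    and i: "[i^2 = -1] (mod q)"
  shows "symmetric_mset (spectrum_adj (PGL2 q) (cayley_adj q (Spq p q i)))"
proof (rule symmetric_spectrum_adj_bipartite)
  have q2: "2 < q"
    using q(2) prime_ge_2_int[OF p] by simp
  define e where "e x = complex_of_int (pgl_det_Legendre q x)" for x
  show "e x = 1 \<or> e x = -1" if "x \<in> PGL2 q" for x
    using pgl_det_Legendre_PGL2[OF q(1) q2 that] unfolding e_def by auto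
  show "e x = - e y" if x: "x \<in> PGL2 q" and "y \<in> PGL2 q"
    and "cayley_adj q (Spq p q i) x y \<noteq> 0" for x y
  proof -
    have "{s \<in> Spq p q i. pgl_mult q x s = y} \<noteq> {}"
      using \<open>cayley_adj q (Spq p q i) x y \<noteq> 0\<close> unfolding cayley_adj_def by (metis card.empty)
    then obtain s where s: "s \<in> Spq p q i" "pgl_mult q x s = y"
      by blast
    obtain M where "x = pgl_class q M"
      using x unfolding PGL2_def by blast
    then show ?thesis
      using pgl_det_Legendre_mult_Spq[OF p q nQR i s(1), of M] s(2) unfolding e_def by simp
  qed
qed

theorem theorem5p2:
  fixes p :: int
  assumes "prime p" and "[p = 1] (mod 4)"
  shows "\<forall>\<epsilon>::real. 0 < \<epsilon> \<and> \<epsilon> < 3/4 \<longrightarrow>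
    (\<exists>q\<epsilon>::int. \<forall>q i::int. prime q \<and> q \<ge> q\<epsilon> \<and> [q = 1] (mod 4) \<and> q \<noteq> p \<and> [i^2 = -1] (mod q) \<longrightarrow>
      ((\<exists>M. M \<subseteq># spectrum_adj (Gq p q) (cayley_adj q (Spq p q i)) \<and> symmetric_mset M \<and>
            real (size M) \<ge> (3/4 - \<epsilon>) * real (card (Gq p q)))
       \<or> (\<exists>\<sigma>\<in>{(0,1,1,0), (0,1,-1,0), (-1,0,0,1)}. \<exists>\<tau>\<in>{(0,1,i,0), (0,-1,i,0), (-1,0,0,1)}.
            \<not> graph_iso (Gq p q) (cayley_adj q (Spq p q i)) (twisted_adj q \<sigma> (Spq p q i)) \<and>
            \<not> graph_iso (Gq p q) (cayley_adj q (Spq p q i)) (twisted_adj q \<tau> (Spq p q i)))))"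
proof (intro allI impI exI[of _ "p + 1"], goal_cases)
  case (1 \<epsilon> q i)
  then have q: "prime q" "p < q" and i: "[i^2 = -1] (mod q)"
    by auto
  show ?case
  proof (cases "QuadRes q p")
    case True
    then have "\<not> graph_iso (Gq p q) (cayley_adj q (Spq p q i)) (twisted_adj q (-1, 0, 0, 1) (Spq p q i))"
      using PSL2_cayley_not_iso_twisted[OF assms q i] by (simp add: Gq_def)
    then show ?thesis
      by blast
  next
    case False
    then have "Gq p q = PGL2 q"
      by (simp add: Gq_def)
    moreover have "finite (PGL2 q)"
      using q(1) by (simp add: finite_PGL2 prime_gt_0_int)
    moreover have "(3/4 - \<epsilon>) * real n \<le> real n" for n
      using \<open>0 < \<epsilon> \<and> \<epsilon> < 3/4\<close> by (intro mult_left_le_one_le) auto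
    ultimately show ?thesis
      using PGL2_cayley_spectrum_symmetric[OF assms(1) q False i]
      by (intro disjI1 exI[of _ "spectrum_adj (PGL2 q) (cayley_adj q (Spq p q i))"])
        (simp add: size_spectrum_adj)
  qed
qed

end
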